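(* Let $\mathbf{\Sigma}$ be a cluster pattern of rank $n$ with free coefficients at $t_0\in\mathbb{T}_n$, and let $\mathbf{\Sigma}'$ be a cluster pattern of rank $n$ with coefficients in any semifield $\mathbb{P}$ having the same $B$-pattern as $\mathbf{\Sigma}$. Then for any $t,t'\in\mathbb{T}_n$ and any permutation $\sigma\in S_n$: if $\Sigma_t=\sigma\Sigma_{t'}$, then $\Sigma'_t=\sigma\Sigma'_{t'}$.
   Context: A semifield is a multiplicative abelian group $\mathbb{P}$ with a commutative, associative addition $\oplus$ satisfying $(a\oplus b)c=ac\oplus bc$; $\mathbb{Q}\mathbb{P}$ is the fraction field of the group ring $\mathbb{Z}\mathbb{P}$. The universal semifield $\mathbb{Q}_{\mathrm{sf}}(\mathbf{y})$ ($\mathbf{y}=(y_1,\dots,y_n)$ formal variables) consists of rational functions in $\mathbf{y}$ expressible as ratios of nonzero polynomials with nonnegative integer coefficients. A seed with coefficients in $\mathbb{P}$ is $(\mathbf{x},\mathbf{y},B)$ with $\mathbf{x}$ a generating transcendence basis of an ambient field $\mathcal{F}\cong\mathbb{Q}\mathbb{P}(u_1,\dots,u_n)$ over $\mathbb{Q}\mathbb{P}$, $\mathbf{y}\in\mathbb{P}^n$, $B$ an $n\times n$ skew-symmetrizable integer matrix. With $[a]_+=\max(a,0)$ and $\hat y_i=y_i\prod_jx_j^{b_{ji}}$, the mutation $\mu_k$ is: $x'_k=x_k^{-1}\big(\prod_{j}x_j^{[-b_{jk}]_+}\big)\frac{1+\hat y_k}{1\oplus y_k}$, $x'_i=x_i$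 ($i\ne k$); $y'_k=y_k^{-1}$, $y'_i=y_iy_k^{[b_{ki}]_+}(1\oplus y_k)^{-b_{ki}}$ ($i\neq k$); $b'_{ij}=-b_{ij}$ if $i=k$ or $j=k$, and $b'_{ij}=b_{ij}+b_{ik}[b_{kj}]_++[-b_{ik}]_+b_{kj}$ otherwise. $\mathbb{T}_n$ is the $n$-regular tree with edges labeled $1,\dots,n$, distinct at each vertex. A cluster pattern is $\{\Sigma_t=(\mathbf{x}_t,\mathbf{y}_t,B_t)\}_{t\in\mathbb{T}_n}$ with $\Sigma_{t'}=\mu_k(\Sigma_t)$ whenever $t,t'$ are joined by an edge labeled $k$; its $B$-pattern is $\{B_t\}$. It has free coefficients at $t_0$ if its coefficient semifield is $\mathbb{Q}_{\mathrm{sf}}(\mathbf{y})$ and $\mathbf{y}_{t_0}=\mathbf{y}$. For $\sigma\in S_n$, $\sigma(\mathbf{x},\mathbf{y},B)=(\mathbf{x}',\mathbf{y}',B')$ with $x'_i=x_{\sigma^{-1}(i)}$, $y'_i=y_{\sigma^{-1}(i)}$, $b'_{ij}=b_{\sigma^{-1}(i)\sigma^{-1}(j)}$. *)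

theory Defs
  imports Complex_Main "HOL-Combinatorics.Permutations"
begin

record 'a semifield =
  sf_carrier :: "'a set"
  sf_mult :: "'a \<Rightarrow> 'a \<Rightarrow> 'a"
  sf_one :: 'a
  sf_inv :: "'a \<Rightarrow> 'a"
  sf_add :: "'a \<Rightarrow> 'a \<Rightarrow> 'a"

definition is_semifield :: "('a, 'b) semifield_scheme \<Rightarrow> bool" where
  "is_semifield P \<longleftrightarrow>
     sf_one P \<in> sf_carrier P \<and>
     (\<forall>a\<in>sf_carrier P. \<forall>b\<in>sf_carrier P.
        sf_mult P a b \<in> sf_carrier P \<and> sf_add P a b \<in> sf_carrier P) \<and>
     (\<forall>a\<in>sf_carrier P. sf_inv P a \<in> sf_carrier P) \<and>
     (\<forall>a\<in>sf_carrier P. \<forall>b\<in>sf_carrier P. \<forall>c\<in>sf_carrier P.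
        sf_mult P (sf_mult P a b) c = sf_mult P a (sf_mult P b c) \<and>
        sf_add P (sf_add P a b) c = sf_add P a (sf_add P b c) \<and>
        sf_mult P (sf_add P a b) c = sf_add P (sf_mult P a c) (sf_mult P b c)) \<and>
     (\<forall>a\<in>sf_carrier P. \<forall>b\<in>sf_carrier P.
        sf_mult P a b = sf_mult P b a \<and> sf_add P a b = sf_add P b a) \<and>
     (\<forall>a\<in>sf_carrier P. sf_mult P (sf_one P) a = a \<and> sf_mult P (sf_inv P a) a = sf_one P)"

fun sf_npow :: "('a, 'b) semifield_scheme \<Rightarrow> 'a \<Rightarrow> nat \<Rightarrow> 'a" where
  "sf_npow P a 0 = sf_one P"
| "sf_npow P a (Suc m) = sf_mult P a (sf_npow P a m)"

definition sf_ipow :: "('a, 'b) semifield_scheme \<Rightarrow> 'a \<Rightarrow> int \<Rightarrow> 'a" where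
  "sf_ipow P a k = (if 0 \<le> k then sf_npow P a (nat k) else sf_inv P (sf_npow P a (nat (- k))))"

definition pos :: "int \<Rightarrow> int" where
  "pos a = max a 0"

definition monomials :: "nat \<Rightarrow> (nat \<Rightarrow> nat) set" where
  "monomials n = {m. \<forall>i\<ge>n. m i = 0}"

definition fin_poly :: "nat \<Rightarrow> ((nat \<Rightarrow> nat) \<Rightarrow> 'a::zero) \<Rightarrow> bool" where
  "fin_poly n c \<longleftrightarrow> finite {m. c m \<noteq> 0} \<and> {m. c m \<noteq> 0} \<subseteq> monomials n"

definition poly_eval :: "nat \<Rightarrow> ((nat \<Rightarrow> nat) \<Rightarrow> 'f::comm_ring_1) \<Rightarrow> (nat \<Rightarrow> 'f) \<Rightarrow> 'f" where
  "poly_eval n c x = (\<Sum>m\<in>{m. c m \<noteq> 0}. c m * (\<Prod>i<n. x i ^ m i))"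

text \<open>Image of the group ring ZP in a field F under the extension of a map iota : P -> F.\<close>
definition group_ring_image :: "'p set \<Rightarrow> ('p \<Rightarrow> 'f::field) \<Rightarrow> 'f set" where
  "group_ring_image C \<iota> =
     {\<Sum>s\<in>S. of_int (c s) * \<iota> s | S c. finite S \<and> S \<subseteq> C}"

text \<open>Image of QP = Frac(ZP).\<close>
definition frac_group_ring :: "'p set \<Rightarrow> ('p \<Rightarrow> 'f::field) \<Rightarrow> 'f set" where
  "frac_group_ring C \<iota> =
     {a / b | a b. a \<in> group_ring_image C \<iota> \<and> b \<in> group_ring_image C \<iota> \<and> b \<noteq> 0}"

text \<open>iota is a multiplicative homomorphism whose Z-linear extension ZP -> F is injective,
  i.e. it realises QP as a subfield of the ambient field F.\<close>
definition coeff_embedding :: "('p, 'b) semifield_scheme \<Rightarrow> ('p \<Rightarrow> 'f::field) \<Rightarrow> bool" where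
  "coeff_embedding P \<iota> \<longleftrightarrow>
     (\<forall>a\<in>sf_carrier P. \<forall>b\<in>sf_carrier P. \<iota> (sf_mult P a b) = \<iota> a * \<iota> b) \<and>
     \<iota> (sf_one P) = 1 \<and>
     (\<forall>S c. finite S \<longrightarrow> S \<subseteq> sf_carrier P \<longrightarrow>
        (\<Sum>s\<in>S. of_int (c s) * \<iota> s) = (0::'f) \<longrightarrow> (\<forall>s\<in>S. c s = (0::int)))"

text \<open>x_0..x_{n-1} is a generating transcendence basis of the field F (= UNIV) over the subfield K.\<close>
definition gen_trans_basis :: "nat \<Rightarrow> 'f set \<Rightarrow> (nat \<Rightarrow> 'f::field) \<Rightarrow> bool" where
  "gen_trans_basis n K x \<longleftrightarrow>
     (\<forall>c. fin_poly n c \<longrightarrow> (\<forall>m. c m \<in> K) \<longrightarrow> poly_eval n c x = 0 \<longrightarrow> (\<forall>m. c m = 0)) \<and>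
     (\<forall>z. \<exists>p q. fin_poly n p \<and> fin_poly n q \<and> (\<forall>m. p m \<in> K \<and> q m \<in> K) \<and>
          poly_eval n q x \<noteq> 0 \<and> z = poly_eval n p x / poly_eval n q x)"

definition skew_symmetrizable :: "nat \<Rightarrow> (nat \<Rightarrow> nat \<Rightarrow> int) \<Rightarrow> bool" where
  "skew_symmetrizable n B \<longleftrightarrow>
     (\<exists>d::nat \<Rightarrow> int. (\<forall>i<n. d i > 0) \<and> (\<forall>i<n. \<forall>j<n. d i * B i j = - (d j * B j i)))"

definition is_seed :: "('p, 'b) semifield_scheme \<Rightarrow> ('p \<Rightarrow> 'f::field) \<Rightarrow> nat \<Rightarrow>
    (nat \<Rightarrow> 'f) \<Rightarrow> (nat \<Rightarrow> 'p) \<Rightarrow> (nat \<Rightarrow> nat \<Rightarrow> int) \<Rightarrow> bool" where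
  "is_seed P \<iota> n x y B \<longleftrightarrow>
     gen_trans_basis n (frac_group_ring (sf_carrier P) \<iota>) x \<and>
     (\<forall>i<n. y i \<in> sf_carrier P) \<and> skew_symmetrizable n B"

definition mut_x :: "('p, 'b) semifield_scheme \<Rightarrow> ('p \<Rightarrow> 'f::field) \<Rightarrow> nat \<Rightarrow> nat \<Rightarrow>
    (nat \<Rightarrow> 'f) \<Rightarrow> (nat \<Rightarrow> 'p) \<Rightarrow> (nat \<Rightarrow> nat \<Rightarrow> int) \<Rightarrow> nat \<Rightarrow> 'f" where
  "mut_x P \<iota> n k x y B i =
     (if i = k then
        inverse (x k) * (\<Prod>j<n. x j powi pos (- B j k)) *
        (1 + \<iota> (y k) * (\<Prod>j<n. x j powi B j k)) / \<iota> (sf_add P (sf_one P) (y k))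
      else x i)"

definition mut_y :: "('p, 'b) semifield_scheme \<Rightarrow> nat \<Rightarrow>
    (nat \<Rightarrow> 'p) \<Rightarrow> (nat \<Rightarrow> nat \<Rightarrow> int) \<Rightarrow> nat \<Rightarrow> 'p" where
  "mut_y P k y B i =
     (if i = k then sf_inv P (y k)
      else sf_mult P (sf_mult P (y i) (sf_ipow P (y k) (pos (B k i))))
                     (sf_ipow P (sf_add P (sf_one P) (y k)) (- B k i)))"

definition mut_B :: "nat \<Rightarrow> (nat \<Rightarrow> nat \<Rightarrow> int) \<Rightarrow> nat \<Rightarrow> nat \<Rightarrow> int" where
  "mut_B k B i j =
     (if i = k \<or> j = k then - B i j
      else B i j + B i k * pos (B k j) + pos (- B i k) * B k j)"

text \<open>Vertices: reduced words over labels 0..n-1 (no two consecutive letters equal);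
  edges: w -- w@[k], labelled k.\<close>
definition tree_vertex :: "nat \<Rightarrow> nat list \<Rightarrow> bool" where
  "tree_vertex n w \<longleftrightarrow> set w \<subseteq> {..<n} \<and> (\<forall>i. Suc i < length w \<longrightarrow> w ! i \<noteq> w ! Suc i)"

definition tree_edge :: "nat \<Rightarrow> nat list \<Rightarrow> nat list \<Rightarrow> nat \<Rightarrow> bool" where
  "tree_edge n t t' k \<longleftrightarrow>
     tree_vertex n t \<and> tree_vertex n t' \<and> k < n \<and> (t' = t @ [k] \<or> t = t' @ [k])"

definition cluster_pattern :: "('p, 'b) semifield_scheme \<Rightarrow> ('p \<Rightarrow> 'f::field) \<Rightarrow> nat \<Rightarrow>
    (nat list \<Rightarrow> nat \<Rightarrow> 'f) \<Rightarrow> (nat list \<Rightarrow> nat \<Rightarrow> 'p) \<Rightarrow> (nat list \<Rightarrow> nat \<Rightarrow> nat \<Rightarrow> int) \<Rightarrow> bool" where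
  "cluster_pattern P \<iota> n X Y B \<longleftrightarrow>
     is_semifield P \<and> coeff_embedding P \<iota> \<and>
     (\<forall>t. tree_vertex n t \<longrightarrow> is_seed P \<iota> n (X t) (Y t) (B t)) \<and>
     (\<forall>t t' k. tree_edge n t t' k \<longrightarrow>
        (\<forall>i<n. X t' i = mut_x P \<iota> n k (X t) (Y t) (B t) i \<and>
               Y t' i = mut_y P k (Y t) (B t) i \<and>
               (\<forall>j<n. B t' i j = mut_B k (B t) i j)))"

text \<open>y_0..y_{n-1} in a field K of characteristic 0 realise K as the rational function field Q(y).\<close>
definition rational_function_field :: "nat \<Rightarrow> (nat \<Rightarrow> 'k::field_char_0) \<Rightarrow> bool" where
  "rational_function_field n y \<longleftrightarrow>
     (\<forall>c::(nat \<Rightarrow> nat) \<Rightarrow> rat. fin_poly n c \<longrightarrow>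
        poly_eval n (\<lambda>m. of_rat (c m)) y = 0 \<longrightarrow> (\<forall>m. c m = 0)) \<and>
     (\<forall>z. \<exists>p q :: (nat \<Rightarrow> nat) \<Rightarrow> rat. fin_poly n p \<and> fin_poly n q \<and>
        poly_eval n (\<lambda>m. of_rat (q m)) y \<noteq> 0 \<and>
        z = poly_eval n (\<lambda>m. of_rat (p m)) y / poly_eval n (\<lambda>m. of_rat (q m)) y)"

definition nn_poly :: "nat \<Rightarrow> ((nat \<Rightarrow> nat) \<Rightarrow> 'k::field_char_0) \<Rightarrow> bool" where
  "nn_poly n c \<longleftrightarrow> fin_poly n c \<and> (\<exists>m. c m \<noteq> 0) \<and> (\<forall>m. \<exists>a::nat. c m = of_nat a)"

definition univ_sf_carrier :: "nat \<Rightarrow> (nat \<Rightarrow> 'k::field_char_0) \<Rightarrow> 'k set" where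
  "univ_sf_carrier n y = {poly_eval n p y / poly_eval n q y | p q. nn_poly n p \<and> nn_poly n q}"

definition univ_semifield :: "nat \<Rightarrow> (nat \<Rightarrow> 'k::field_char_0) \<Rightarrow> 'k semifield" where
  "univ_semifield n y =
     \<lparr>sf_carrier = univ_sf_carrier n y, sf_mult = (*), sf_one = 1,
      sf_inv = inverse, sf_add = (+)\<rparr>"

text \<open>(x,y,B) = sigma (x2,y2,B2)\<close>
definition seed_eq_perm :: "nat \<Rightarrow> (nat \<Rightarrow> nat) \<Rightarrow>
    (nat \<Rightarrow> 'f) \<Rightarrow> (nat \<Rightarrow> 'p) \<Rightarrow> (nat \<Rightarrow> nat \<Rightarrow> int) \<Rightarrow>
    (nat \<Rightarrow> 'f) \<Rightarrow> (nat \<Rightarrow> 'p) \<Rightarrow> (nat \<Rightarrow> nat \<Rightarrow> int) \<Rightarrow> bool" where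
  "seed_eq_perm n \<sigma> x y B x2 y2 B2 \<longleftrightarrow>
     (\<forall>i<n. x i = x2 (inv \<sigma> i) \<and> y i = y2 (inv \<sigma> i) \<and>
            (\<forall>j<n. B i j = B2 (inv \<sigma> i) (inv \<sigma> j)))"

end

(* Q_sf(y) is the free semifield on y_1, ..., y_n, so y_i |-> y'_{t0,i} extends to a semifield
   homomorphism h : Q_sf(y) -> P. Applying h to the coefficients and substituting x'_{t0} for x_{t0}
   gives a partial map from the ambient field of Sigma to that of Sigma'; it is well defined because
   x_{t0} is algebraically independent over QP, and it commutes with the field operations, hence
   with mutations. Propagating along T_n, every seed of Sigma is mapped onto the corresponding seed
   of Sigma', so the relation Sigma_t = sigma Sigma_{t'} is carried over to Sigma'. *)

theory Submission
  imports Defs "HOL-Library.Multiset"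
begin

section \<open>Semifields\<close>

locale semifield_struct =
  fixes P :: "('a, 'b) semifield_scheme"
  assumes is_semifield: "is_semifield P"
begin

abbreviation "car \<equiv> sf_carrier P"
abbreviation "mul \<equiv> sf_mult P"
abbreviation "add \<equiv> sf_add P"
abbreviation "one \<equiv> sf_one P"
abbreviation "inv' \<equiv> sf_inv P"

lemma one_closed [simp]: "one \<in> car"
  and mult_closed [simp]: "a \<in> car \<Longrightarrow> b \<in> car \<Longrightarrow> mul a b \<in> car"
  and add_closed [simp]: "a \<in> car \<Longrightarrow> b \<in> car \<Longrightarrow> add a b \<in> car"
  and inv_closed [simp]: "a \<in> car \<Longrightarrow> inv' a \<in> car"
  and mult_assoc: "a \<in> car \<Longrightarrow> b \<in> car \<Longrightarrow> c \<in> car \<Longrightarrow> mul (mul a b) c = mul a (mul b c)"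
  and add_assoc: "a \<in> car \<Longrightarrow> b \<in> car \<Longrightarrow> c \<in> car \<Longrightarrow> add (add a b) c = add a (add b c)"
  and distrib_right: "a \<in> car \<Longrightarrow> b \<in> car \<Longrightarrow> c \<in> car \<Longrightarrow> mul (add a b) c = add (mul a c) (mul b c)"
  and mult_commute: "a \<in> car \<Longrightarrow> b \<in> car \<Longrightarrow> mul a b = mul b a"
  and add_commute: "a \<in> car \<Longrightarrow> b \<in> car \<Longrightarrow> add a b = add b a"
  and mult_one_left [simp]: "a \<in> car \<Longrightarrow> mul one a = a"
  and inv_mult_left [simp]: "a \<in> car \<Longrightarrow> mul (inv' a) a = one"
  using is_semifield unfolding is_semifield_def by blast+

lemma mult_one_right [simp]: "a \<in> car \<Longrightarrow> mul a one = a"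
  by (metis mult_commute mult_one_left one_closed)

lemma inv_mult_right [simp]: "a \<in> car \<Longrightarrow> mul a (inv' a) = one"
  by (metis mult_commute inv_mult_left inv_closed)

lemma distrib_left: "a \<in> car \<Longrightarrow> b \<in> car \<Longrightarrow> c \<in> car \<Longrightarrow> mul c (add a b) = add (mul c a) (mul c b)"
  by (metis distrib_right mult_commute add_closed)

lemma inv_one: "inv' one = one"
  by (metis inv_mult_left mult_one_right one_closed inv_closed)

lemma mult_left_commute: "a \<in> car \<Longrightarrow> b \<in> car \<Longrightarrow> c \<in> car \<Longrightarrow> mul a (mul b c) = mul b (mul a c)"
  by (metis mult_assoc mult_commute)

lemma add_left_commute: "a \<in> car \<Longrightarrow> b \<in> car \<Longrightarrow> c \<in> car \<Longrightarrow> add a (add b c) = add b (add a c)"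
  by (metis add_assoc add_commute)

lemma mult_mult_swap: "a \<in> car \<Longrightarrow> b \<in> car \<Longrightarrow> c \<in> car \<Longrightarrow> d \<in> car \<Longrightarrow>
    mul (mul a b) (mul c d) = mul (mul a c) (mul b d)"
  by (simp add: mult_assoc mult_left_commute[of b c d])

lemma mult_left_cancel: "a \<in> car \<Longrightarrow> b \<in> car \<Longrightarrow> c \<in> car \<Longrightarrow> mul c a = mul c b \<Longrightarrow> a = b"
  by (metis inv_closed mult_assoc inv_mult_left mult_one_left)

lemma inv_mult_distrib:
  assumes "a \<in> car" "b \<in> car"
  shows "inv' (mul a b) = mul (inv' a) (inv' b)"
proof (rule mult_left_cancel[of _ _ "mul a b"])
  have "mul (mul a b) (mul (inv' a) (inv' b)) = mul (mul a (inv' a)) (mul b (inv' b))"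
    using assms by (intro mult_mult_swap) simp_all
  then show "mul (mul a b) (inv' (mul a b)) = mul (mul a b) (mul (inv' a) (inv' b))"
    using assms by simp
qed (use assms in simp_all)

lemma inv_inv [simp]: "a \<in> car \<Longrightarrow> inv' (inv' a) = a"
  by (rule mult_left_cancel[of _ _ "inv' a"]) auto

lemma mult_frac_cancel:
  assumes "a \<in> car" "b \<in> car" "d \<in> car"
  shows "mul (mul a d) (mul (inv' b) (inv' d)) = mul a (inv' b)"
  using assms by (simp add: mult_mult_swap[of a d "inv' b" "inv' d"])

lemma mult_inv_eq_mult_inv:
  assumes "a \<in> car" "b \<in> car" "c \<in> car" "d \<in> car" and "mul a d = mul c b"
  shows "mul a (inv' b) = mul c (inv' d)"
  using mult_frac_cancel[of a b d] mult_frac_cancel[of c d b] assms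
  by (simp add: mult_commute[of "inv' b" "inv' d"])

lemma mult_fractions:
  assumes "a \<in> car" "b \<in> car" "c \<in> car" "d \<in> car"
  shows "mul (mul a c) (inv' (mul b d)) = mul (mul a (inv' b)) (mul c (inv' d))"
  using assms by (simp add: inv_mult_distrib mult_mult_swap[of a c "inv' b" "inv' d"])

lemma add_fractions:
  assumes "a \<in> car" "b \<in> car" "c \<in> car" "d \<in> car"
  shows "mul (add (mul a d) (mul c b)) (inv' (mul b d)) = add (mul a (inv' b)) (mul c (inv' d))"
  using assms mult_frac_cancel[of a b d] mult_frac_cancel[of c d b]
  by (simp add: inv_mult_distrib distrib_right mult_commute[of "inv' b" "inv' d"])

lemma npow_closed [simp]: "a \<in> car \<Longrightarrow> sf_npow P a m \<in> car"
  by (induction m) auto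

lemma npow_add: "a \<in> car \<Longrightarrow> sf_npow P a (p + q) = mul (sf_npow P a p) (sf_npow P a q)"
  by (induction p) (auto simp: mult_assoc)

lemma ipow_closed [simp]: "a \<in> car \<Longrightarrow> sf_ipow P a k \<in> car"
  by (simp add: sf_ipow_def)

lemma embedding_nonzero:
  assumes "coeff_embedding P \<iota>" and "a \<in> car"
  shows "\<iota> a \<noteq> 0"
proof
  assume "\<iota> a = 0"
  have "\<iota> (mul (inv' a) a) = \<iota> (inv' a) * \<iota> a" and "\<iota> one = 1"
    using assms unfolding coeff_embedding_def by (simp_all del: inv_mult_left)
  then have "\<iota> (inv' a) * \<iota> a = 1"
    using assms by simp
  then show False
    using \<open>\<iota> a = 0\<close> by simp
qed

lemma zero_in_group_ring_image: "0 \<in> group_ring_image car \<iota>"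
  unfolding group_ring_image_def by (force intro!: exI[of _ "{}"])

lemma one_in_group_ring_image:
  assumes "coeff_embedding P \<iota>"
  shows "1 \<in> group_ring_image car \<iota>"
proof -
  have "\<iota> one = 1"
    using assms unfolding coeff_embedding_def by simp
  then show ?thesis
    unfolding group_ring_image_def by (force intro!: exI[of _ "{one}"] exI[of _ "\<lambda>_. 1"])
qed

lemma group_ring_image_subset_frac_group_ring:
  assumes "coeff_embedding P \<iota>"
  shows "group_ring_image car \<iota> \<subseteq> frac_group_ring car \<iota>"
proof
  fix a assume "a \<in> group_ring_image car \<iota>"
  then have "a / 1 \<in> frac_group_ring car \<iota>"
    using one_in_group_ring_image[OF assms] one_neq_zero unfolding frac_group_ring_def by blast
  then show "a \<in> frac_group_ring car \<iota>"
    by simp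
qed

lemma zero_one_in_frac_group_ring:
  assumes "coeff_embedding P \<iota>"
  shows "0 \<in> frac_group_ring car \<iota>" and "1 \<in> frac_group_ring car \<iota>"
  using group_ring_image_subset_frac_group_ring[OF assms] zero_in_group_ring_image
    one_in_group_ring_image[OF assms] by blast+

end

locale semifield_hom =
  A: semifield_struct PA + B: semifield_struct PB
  for PA :: "('a, 'c) semifield_scheme" and PB :: "('b, 'd) semifield_scheme" +
  fixes h :: "'a \<Rightarrow> 'b"
  assumes hom_closed: "a \<in> A.car \<Longrightarrow> h a \<in> B.car"
    and hom_mult: "a \<in> A.car \<Longrightarrow> b \<in> A.car \<Longrightarrow> h (A.mul a b) = B.mul (h a) (h b)"
    and hom_add: "a \<in> A.car \<Longrightarrow> b \<in> A.car \<Longrightarrow> h (A.add a b) = B.add (h a) (h b)"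
    and hom_inv: "a \<in> A.car \<Longrightarrow> h (A.inv' a) = B.inv' (h a)"
    and hom_one: "h A.one = B.one"
begin

lemma hom_npow: "a \<in> A.car \<Longrightarrow> h (sf_npow PA a m) = sf_npow PB (h a) m"
  by (induction m) (auto simp: hom_mult hom_one)

lemma hom_ipow: "a \<in> A.car \<Longrightarrow> h (sf_ipow PA a k) = sf_ipow PB (h a) k"
  by (simp add: sf_ipow_def hom_npow hom_inv)

lemma hom_mut_y:
  assumes "y k \<in> A.car" and "y i \<in> A.car"
  shows "h (mut_y PA k y B i) = mut_y PB k (\<lambda>j. h (y j)) B i"
  using assms by (simp add: mut_y_def hom_inv hom_mult hom_ipow hom_add hom_one)

end

section \<open>Subtraction-free polynomials\<close>

definition monomial_val :: "nat \<Rightarrow> (nat \<Rightarrow> 'a::comm_monoid_mult) \<Rightarrow> (nat \<Rightarrow> nat) \<Rightarrow> 'a" where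
  "monomial_val n x m = (\<Prod>i<n. x i ^ m i)"

definition monomial_sum :: "nat \<Rightarrow> (nat \<Rightarrow> 'a::comm_semiring_1) \<Rightarrow> (nat \<Rightarrow> nat) list \<Rightarrow> 'a" where
  "monomial_sum n x ms = (\<Sum>m\<leftarrow>ms. monomial_val n x m)"

definition monomials_mult :: "(nat \<Rightarrow> nat) list \<Rightarrow> (nat \<Rightarrow> nat) list \<Rightarrow> (nat \<Rightarrow> nat) list" where
  "monomials_mult ms ms' = [(\<lambda>i. m i + m' i). m \<leftarrow> ms, m' \<leftarrow> ms']"

lemma prod_power_indicator:
  fixes x :: "nat \<Rightarrow> 'a::comm_monoid_mult"
  assumes "i < n"
  shows "(\<Prod>j<n. x j ^ (if j = i then 1 else 0)) = x i"
proof -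
  have "(\<Prod>j<n. x j ^ (if j = i then 1 else 0)) = (\<Prod>j<n. if j = i then x j else 1)"
    by (rule prod.cong) auto
  then show ?thesis
    using assms by simp
qed

lemma monomial_val_add: "monomial_val n x (\<lambda>i. m i + m' i) = monomial_val n x m * monomial_val n x m'"
  by (simp add: monomial_val_def power_add prod.distrib)

lemma monomial_sum_append: "monomial_sum n x (ms @ ms') = monomial_sum n x ms + monomial_sum n x ms'"
  by (simp add: monomial_sum_def)

lemma monomial_sum_mult:
  "monomial_sum n x (monomials_mult ms ms') = monomial_sum n x ms * monomial_sum n x ms'"
  by (induction ms)
    (simp_all add: monomials_mult_def monomial_sum_def monomial_val_add sum_list_const_mult
      distrib_right comp_def)

lemma monomials_mult_Nil_iff: "monomials_mult ms ms' = [] \<longleftrightarrow> ms = [] \<or> ms' = []"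
  by (cases ms; cases ms') (simp_all add: monomials_mult_def)

lemma monomials_mult_closed:
  "set ms \<subseteq> monomials n \<Longrightarrow> set ms' \<subseteq> monomials n \<Longrightarrow> set (monomials_mult ms ms') \<subseteq> monomials n"
  unfolding monomials_mult_def monomials_def by force

fun sf_monomial :: "('a, 'b) semifield_scheme \<Rightarrow> (nat \<Rightarrow> 'a) \<Rightarrow> (nat \<Rightarrow> nat) \<Rightarrow> nat \<Rightarrow> 'a" where
  "sf_monomial P z m 0 = sf_one P"
| "sf_monomial P z m (Suc j) = sf_mult P (sf_monomial P z m j) (sf_npow P (z j) (m j))"

text \<open>A semifield has no zero: only sums over nonempty lists are meaningful, the value at the
  empty list is junk.\<close>

fun sf_monomial_sum :: "('a, 'b) semifield_scheme \<Rightarrow> (nat \<Rightarrow> 'a) \<Rightarrow> nat \<Rightarrow> (nat \<Rightarrow> nat) list \<Rightarrow> 'a" where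
  "sf_monomial_sum P z n [] = sf_one P"
| "sf_monomial_sum P z n [m] = sf_monomial P z m n"
| "sf_monomial_sum P z n (m # m' # ms) =
     sf_add P (sf_monomial P z m n) (sf_monomial_sum P z n (m' # ms))"

locale semifield_point = semifield_struct P for P :: "('a, 'b) semifield_scheme" +
  fixes n :: nat and z :: "nat \<Rightarrow> 'a"
  assumes point_closed: "i < n \<Longrightarrow> z i \<in> car"
begin

abbreviation "mon m \<equiv> sf_monomial P z m n"
abbreviation "msum ms \<equiv> sf_monomial_sum P z n ms"

lemma sf_monomial_closed: "j \<le> n \<Longrightarrow> sf_monomial P z m j \<in> car"
  by (induction j) (auto simp: point_closed)

lemma sf_monomial_add:
  "j \<le> n \<Longrightarrow> sf_monomial P z (\<lambda>i. m i + m' i) j = mul (sf_monomial P z m j) (sf_monomial P z m' j)"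
proof (induction j)
  case (Suc j)
  then show ?case
    by (simp add: npow_add point_closed sf_monomial_closed
        mult_mult_swap[of "sf_monomial P z m j" "sf_monomial P z m' j"])
qed simp

lemma sf_monomial_zero: "sf_monomial P z (\<lambda>_. 0) j = one"
  by (induction j) simp_all

lemma sf_monomial_var: "j \<le> n \<Longrightarrow> sf_monomial P z (\<lambda>k. if k = i then 1 else 0) j = (if i < j then z i else one)"
  by (induction j) (auto simp: point_closed sf_monomial_closed less_Suc_eq)

lemma sf_monomial_sum_closed [simp]: "msum ms \<in> car"
proof (induction ms)
  case (Cons m ms)
  then show ?case
    by (cases ms) (simp_all add: sf_monomial_closed)
qed simp

lemma sf_monomial_sum_Cons: "ms \<noteq> [] \<Longrightarrow> msum (m # ms) = add (mon m) (msum ms)"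
  by (cases ms) auto

lemma sf_monomial_sum_append:
  "ms \<noteq> [] \<Longrightarrow> ms' \<noteq> [] \<Longrightarrow> msum (ms @ ms') = add (msum ms) (msum ms')"
proof (induction ms)
  case (Cons m ms)
  then show ?case
    by (cases "ms = []") (simp_all add: sf_monomial_sum_Cons add_assoc sf_monomial_closed)
qed simp

lemma sf_monomial_sum_remove1:
  "m \<in> set ms \<Longrightarrow> remove1 m ms \<noteq> [] \<Longrightarrow> msum ms = add (mon m) (msum (remove1 m ms))"
proof (induction ms)
  case (Cons a ms)
  show ?case
  proof (cases "a = m")
    case False
    then have "m \<in> set ms" "ms \<noteq> []"
      using Cons.prems by auto
    show ?thesis
    proof (cases "remove1 m ms = []")
      case True
      then have "ms = [m]"
        using \<open>m \<in> set ms\<close> by (cases ms) (auto split: if_splits)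
      then show ?thesis
        using False by (simp add: add_commute sf_monomial_closed)
    next
      case False
      then show ?thesis
        using Cons \<open>a \<noteq> m\<close> \<open>m \<in> set ms\<close> \<open>ms \<noteq> []\<close>
        by (simp add: sf_monomial_sum_Cons add_left_commute sf_monomial_closed)
    qed
  qed (use Cons.prems in \<open>simp add: sf_monomial_sum_Cons\<close>)
qed simp

lemma sf_monomial_sum_mset_eq: "mset ms = mset ms' \<Longrightarrow> msum ms = msum ms'"
proof (induction ms arbitrary: ms')
  case (Cons m ms)
  have m: "m \<in> set ms'"
    using Cons.prems by (metis list.set_intros(1) set_mset_mset)
  have rest: "mset ms = mset (remove1 m ms')"
    using Cons.prems by (metis add_mset_remove_trivial mset.simps(2) mset_remove1)
  show ?case
  proof (cases "ms = []")
    case True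
    then show ?thesis
      using Cons.prems by simp
  next
    case False
    then have "remove1 m ms' \<noteq> []"
      using rest by (metis mset_zero_iff)
    then show ?thesis
      using Cons.IH[OF rest] False m by (simp add: sf_monomial_sum_Cons sf_monomial_sum_remove1)
  qed
qed simp

lemma sf_monomial_sum_map_add:
  "ms \<noteq> [] \<Longrightarrow> msum (map (\<lambda>m' i. m i + m' i) ms) = mul (mon m) (msum ms)"
proof (induction ms)
  case (Cons m' ms)
  then show ?case
    by (cases "ms = []")
      (simp_all add: sf_monomial_sum_Cons sf_monomial_add distrib_left sf_monomial_closed)
qed simp

lemma sf_monomial_sum_mult:
  "ms \<noteq> [] \<Longrightarrow> ms' \<noteq> [] \<Longrightarrow> msum (monomials_mult ms ms') = mul (msum ms) (msum ms')"
proof (induction ms)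
  case (Cons m ms)
  show ?case
  proof (cases "ms = []")
    case True
    then show ?thesis
      using Cons.prems by (simp add: monomials_mult_def sf_monomial_sum_map_add)
  next
    case False
    have "monomials_mult (m # ms) ms' = map (\<lambda>m' i. m i + m' i) ms' @ monomials_mult ms ms'"
      by (simp add: monomials_mult_def)
    then show ?thesis
      using Cons False
      by (simp add: sf_monomial_sum_append sf_monomial_sum_map_add monomials_mult_Nil_iff
          sf_monomial_sum_Cons distrib_right sf_monomial_closed)
  qed
qed simp

end

lemma monomial_sum_count:
  assumes "finite U" and "set ms \<subseteq> U"
  shows "monomial_sum n x ms = (\<Sum>m\<in>U. of_nat (count_list ms m) * monomial_val n x m)"
  using assms(2)
proof (induction ms)
  case (Cons m' ms)
  have "(\<Sum>m\<in>U. of_nat (count_list (m' # ms) m) * monomial_val n x m) =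
        (\<Sum>m\<in>U. (if m' = m then monomial_val n x m else 0) + of_nat (count_list ms m) * monomial_val n x m)"
    by (rule sum.cong) (auto simp: distrib_right)
  also have "\<dots> = monomial_val n x m' + (\<Sum>m\<in>U. of_nat (count_list ms m) * monomial_val n x m)"
    using Cons.prems assms(1) by (simp add: sum.distrib)
  finally show ?case
    using Cons by (simp add: monomial_sum_def)
qed (simp add: monomial_sum_def)

lemma monomial_sum_eq_imp_mset_eq:
  fixes y :: "nat \<Rightarrow> 'k::field_char_0"
  assumes rff: "rational_function_field n y"
    and ms: "set ms \<subseteq> monomials n" and ms': "set ms' \<subseteq> monomials n"
    and eq: "monomial_sum n y ms = monomial_sum n y ms'"
  shows "mset ms = mset ms'"
proof -
  define c :: "(nat \<Rightarrow> nat) \<Rightarrow> rat" where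
    "c m = of_nat (count_list ms m) - of_nat (count_list ms' m)" for m
  define U where "U = set ms \<union> set ms'"
  have "finite U"
    by (simp add: U_def)
  have supp: "{m. c m \<noteq> 0} \<subseteq> U"
    by (auto simp: c_def U_def count_list_0_iff)
  have "fin_poly n c"
    unfolding fin_poly_def using supp \<open>finite U\<close> ms ms' by (auto simp: U_def intro: finite_subset)
  have "poly_eval n (\<lambda>m. of_rat (c m)) y = (\<Sum>m\<in>U. of_rat (c m) * monomial_val n y m)"
    unfolding poly_eval_def monomial_val_def[symmetric] of_rat_eq_0_iff
    by (rule sum.mono_neutral_left[OF \<open>finite U\<close> supp]) auto
  also have "\<dots> = monomial_sum n y ms - monomial_sum n y ms'"
    using monomial_sum_count[OF \<open>finite U\<close>, of ms n y] monomial_sum_count[OF \<open>finite U\<close>, of ms' n y]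
    by (simp add: U_def c_def of_rat_diff left_diff_distrib sum_subtractf)
  finally have "poly_eval n (\<lambda>m. of_rat (c m)) y = 0"
    using eq by simp
  then have "\<forall>m. c m = 0"
    using rff \<open>fin_poly n c\<close> unfolding rational_function_field_def by blast
  then show ?thesis
    by (auto simp: c_def multiset_eq_iff count_mset)
qed

lemma monomial_sum_nonzero:
  fixes y :: "nat \<Rightarrow> 'k::field_char_0"
  assumes "rational_function_field n y" and "ms \<noteq> []" and "set ms \<subseteq> monomials n"
  shows "monomial_sum n y ms \<noteq> 0"
  using assms monomial_sum_eq_imp_mset_eq[of n y ms "[]"] by (auto simp: monomial_sum_def)

lemma nn_poly_eval_as_monomial_sum:
  assumes p: "nn_poly n p"
  shows "\<exists>ms. ms \<noteq> [] \<and> set ms \<subseteq> monomials n \<and> poly_eval n p y = monomial_sum n y ms"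
proof -
  define S where "S = {m. p m \<noteq> 0}"
  have "finite S" and "S \<subseteq> monomials n"
    using p by (auto simp: nn_poly_def fin_poly_def S_def)
  obtain ds where ds: "set ds = S" "distinct ds"
    using finite_distinct_list[OF \<open>finite S\<close>] by blast
  define a where "a m = (SOME a. p m = of_nat a)" for m
  have pa: "p m = of_nat (a m)" for m
    unfolding a_def by (rule someI_ex) (use p in \<open>auto simp: nn_poly_def\<close>)
  define ms where "ms = concat (map (\<lambda>m. replicate (a m) m) ds)"
  have "monomial_sum n y ms = (\<Sum>m\<leftarrow>ds. of_nat (a m) * monomial_val n y m)"
    unfolding ms_def by (induction ds) (auto simp: monomial_sum_def sum_list_replicate)
  also have "\<dots> = poly_eval n p y"
    using ds by (simp add: sum_list_distinct_conv_sum_set pa poly_eval_def S_def monomial_val_def)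
  finally have "poly_eval n p y = monomial_sum n y ms" ..
  moreover obtain m0 where "p m0 \<noteq> 0"
    using p by (auto simp: nn_poly_def)
  then have "m0 \<in> set ms"
    using ds pa by (auto simp: ms_def S_def)
  moreover have "set ms \<subseteq> monomials n"
    using \<open>S \<subseteq> monomials n\<close> ds by (auto simp: ms_def)
  ultimately show ?thesis
    by (metis empty_iff list.set(1))
qed

section \<open>The universal property of the free semifield\<close>

definition monomial_frac_rep ::
    "nat \<Rightarrow> (nat \<Rightarrow> 'k::field) \<Rightarrow> (nat \<Rightarrow> nat) list \<Rightarrow> (nat \<Rightarrow> nat) list \<Rightarrow> 'k \<Rightarrow> bool" where
  "monomial_frac_rep n y ms ms' w \<longleftrightarrow>
     ms \<noteq> [] \<and> ms' \<noteq> [] \<and> set ms \<subseteq> monomials n \<and> set ms' \<subseteq> monomials n \<and>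
     w = monomial_sum n y ms / monomial_sum n y ms'"

lemma univ_sf_carrier_rep:
  assumes "w \<in> univ_sf_carrier n y"
  shows "\<exists>ms ms'. monomial_frac_rep n y ms ms' w"
proof -
  obtain p q where "nn_poly n p" "nn_poly n q" and w: "w = poly_eval n p y / poly_eval n q y"
    using assms unfolding univ_sf_carrier_def by blast
  then obtain ms ms' where
    "ms \<noteq> []" "set ms \<subseteq> monomials n" "poly_eval n p y = monomial_sum n y ms"
    "ms' \<noteq> []" "set ms' \<subseteq> monomials n" "poly_eval n q y = monomial_sum n y ms'"
    by (metis nn_poly_eval_as_monomial_sum)
  then show ?thesis
    using w unfolding monomial_frac_rep_def by metis
qed

lemma monomial_frac_rep_mult:
  "monomial_frac_rep n y ms1 ms1' a \<Longrightarrow> monomial_frac_rep n y ms2 ms2' b \<Longrightarrow>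
   monomial_frac_rep n y (monomials_mult ms1 ms2) (monomials_mult ms1' ms2') (a * b)"
  by (simp add: monomial_frac_rep_def monomials_mult_Nil_iff monomials_mult_closed monomial_sum_mult)

lemma monomial_frac_rep_add:
  assumes "rational_function_field n y"
    and "monomial_frac_rep n y ms1 ms1' a" and "monomial_frac_rep n y ms2 ms2' b"
  shows "monomial_frac_rep n y (monomials_mult ms1 ms2' @ monomials_mult ms2 ms1')
           (monomials_mult ms1' ms2') (a + b)"
  using assms monomial_sum_nonzero[OF assms(1)]
  by (auto simp: monomial_frac_rep_def monomials_mult_Nil_iff monomials_mult_closed
      monomial_sum_mult monomial_sum_append add_frac_eq mult.commute)

lemma monomial_frac_rep_inverse:
  "monomial_frac_rep n y ms ms' a \<Longrightarrow> monomial_frac_rep n y ms' ms (inverse a)"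
  by (simp add: monomial_frac_rep_def)

lemma monomial_frac_rep_one: "monomial_frac_rep n y [\<lambda>_. 0] [\<lambda>_. 0] 1"
  by (simp add: monomial_frac_rep_def monomials_def monomial_sum_def monomial_val_def)

lemma monomial_frac_rep_var:
  "i < n \<Longrightarrow> monomial_frac_rep n y [\<lambda>j. if j = i then 1 else 0] [\<lambda>_. 0] (y i)"
  by (simp add: monomial_frac_rep_def monomials_def monomial_sum_def monomial_val_def
      prod_power_indicator)

definition sf_specialize ::
    "nat \<Rightarrow> (nat \<Rightarrow> 'k::field) \<Rightarrow> ('a, 'b) semifield_scheme \<Rightarrow> (nat \<Rightarrow> 'a) \<Rightarrow> 'k \<Rightarrow> 'a" where
  "sf_specialize n y P z w =
     (SOME v. \<exists>ms ms'. monomial_frac_rep n y ms ms' w \<and>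
        v = sf_mult P (sf_monomial_sum P z n ms) (sf_inv P (sf_monomial_sum P z n ms')))"

locale sf_specialization = semifield_point P n z
  for P :: "('a, 'b) semifield_scheme" and n z +
  fixes y :: "nat \<Rightarrow> 'k::field_char_0"
  assumes rff: "rational_function_field n y"
begin

abbreviation "spec \<equiv> sf_specialize n y P z"

text \<open>Well-definedness: two representations of \<open>w\<close> have equal cross products, and since \<open>y\<close> is
  algebraically independent the cross products agree as multisets of monomials.\<close>

lemma sf_specialize_rep:
  assumes rep: "monomial_frac_rep n y ms ms' w"
  shows "spec w = mul (msum ms) (inv' (msum ms'))"
proof -
  obtain ns ns' where rep2: "monomial_frac_rep n y ns ns' w"
    and spec: "spec w = mul (msum ns) (inv' (msum ns'))"
    using someI_ex[of "\<lambda>v. \<exists>ms ms'. monomial_frac_rep n y ms ms' w \<and> v = mul (msum ms) (inv' (msum ms'))"]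
      rep unfolding sf_specialize_def by blast
  have "monomial_sum n y ms' \<noteq> 0" "monomial_sum n y ns' \<noteq> 0"
    using rep rep2 monomial_sum_nonzero[OF rff] by (auto simp: monomial_frac_rep_def)
  moreover have "monomial_sum n y ms / monomial_sum n y ms' = monomial_sum n y ns / monomial_sum n y ns'"
    using rep rep2 by (simp add: monomial_frac_rep_def)
  ultimately have "monomial_sum n y ms * monomial_sum n y ns' = monomial_sum n y ns * monomial_sum n y ms'"
    by (simp add: frac_eq_eq)
  then have "mset (monomials_mult ms ns') = mset (monomials_mult ns ms')"
    using rep rep2
    by (intro monomial_sum_eq_imp_mset_eq[OF rff] monomials_mult_closed)
      (auto simp: monomial_frac_rep_def monomial_sum_mult)
  then have "msum (monomials_mult ms ns') = msum (monomials_mult ns ms')"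
    by (rule sf_monomial_sum_mset_eq)
  then have "mul (msum ms) (msum ns') = mul (msum ns) (msum ms')"
    using rep rep2 by (simp add: monomial_frac_rep_def sf_monomial_sum_mult)
  then show ?thesis
    using spec mult_inv_eq_mult_inv[of "msum ms" "msum ms'" "msum ns" "msum ns'"] by simp
qed

lemma sf_specialize_closed: "w \<in> univ_sf_carrier n y \<Longrightarrow> spec w \<in> car"
  using univ_sf_carrier_rep sf_specialize_rep by fastforce

lemma sf_specialize_mult:
  assumes "a \<in> univ_sf_carrier n y" and "b \<in> univ_sf_carrier n y"
  shows "spec (a * b) = mul (spec a) (spec b)"
proof -
  obtain ms1 ms1' ms2 ms2' where r: "monomial_frac_rep n y ms1 ms1' a" "monomial_frac_rep n y ms2 ms2' b"
    using assms univ_sf_carrier_rep by meson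
  then have "ms1 \<noteq> []" "ms1' \<noteq> []" "ms2 \<noteq> []" "ms2' \<noteq> []"
    by (simp_all add: monomial_frac_rep_def)
  then show ?thesis
    by (simp add: sf_specialize_rep[OF monomial_frac_rep_mult[OF r]] sf_specialize_rep[OF r(1)]
        sf_specialize_rep[OF r(2)] sf_monomial_sum_mult mult_fractions)
qed

lemma sf_specialize_add:
  assumes "a \<in> univ_sf_carrier n y" and "b \<in> univ_sf_carrier n y"
  shows "spec (a + b) = add (spec a) (spec b)"
proof -
  obtain ms1 ms1' ms2 ms2' where r: "monomial_frac_rep n y ms1 ms1' a" "monomial_frac_rep n y ms2 ms2' b"
    using assms univ_sf_carrier_rep by meson
  then have ne: "ms1 \<noteq> []" "ms1' \<noteq> []" "ms2 \<noteq> []" "ms2' \<noteq> []"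
    by (simp_all add: monomial_frac_rep_def)
  have "spec (a + b) = mul (msum (monomials_mult ms1 ms2' @ monomials_mult ms2 ms1'))
                           (inv' (msum (monomials_mult ms1' ms2')))"
    by (rule sf_specialize_rep[OF monomial_frac_rep_add[OF rff r]])
  also have "\<dots> = mul (add (mul (msum ms1) (msum ms2')) (mul (msum ms2) (msum ms1')))
                     (inv' (mul (msum ms1') (msum ms2')))"
    using ne by (subst sf_monomial_sum_append) (simp_all add: monomials_mult_Nil_iff sf_monomial_sum_mult)
  also have "\<dots> = add (spec a) (spec b)"
    by (simp add: add_fractions sf_specialize_rep[OF r(1)] sf_specialize_rep[OF r(2)])
  finally show ?thesis .
qed

lemma sf_specialize_inverse:
  assumes "a \<in> univ_sf_carrier n y"
  shows "spec (inverse a) = inv' (spec a)"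
proof -
  obtain ms ms' where r: "monomial_frac_rep n y ms ms' a"
    using assms univ_sf_carrier_rep by meson
  then show ?thesis
    by (simp add: sf_specialize_rep[OF monomial_frac_rep_inverse[OF r]] sf_specialize_rep[OF r]
        inv_mult_distrib mult_commute)
qed

lemma sf_specialize_one: "spec 1 = one"
  by (simp add: sf_specialize_rep[OF monomial_frac_rep_one] sf_monomial_zero)

lemma sf_specialize_var: "i < n \<Longrightarrow> spec (y i) = z i"
  by (simp add: sf_specialize_rep[OF monomial_frac_rep_var] sf_monomial_zero sf_monomial_var
      point_closed inv_one)

lemma semifield_hom_sf_specialize:
  assumes "is_semifield (univ_semifield n y)"
  shows "semifield_hom (univ_semifield n y) P spec"
  by (intro semifield_hom.intro semifield_struct.intro semifield_hom_axioms.intro assms is_semifield)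
    (simp_all add: univ_semifield_def sf_specialize_closed sf_specialize_mult
      sf_specialize_add sf_specialize_inverse sf_specialize_one)

end

section \<open>Specialization of the ambient field\<close>

lemma sum_of_int_regroup:
  fixes G :: "'r \<Rightarrow> 'a::comm_ring_1"
  assumes "finite A"
  shows "(\<Sum>s\<in>A. of_int (c s) * G (f s)) =
         (\<Sum>r\<in>f ` A. of_int (\<Sum>s\<in>{s\<in>A. f s = r}. c s) * G r)"
proof -
  have "(\<Sum>s\<in>A. of_int (c s) * G (f s)) = (\<Sum>r\<in>f ` A. \<Sum>s\<in>{s\<in>A. f s = r}. of_int (c s) * G (f s))"
    by (rule sum.image_gen[OF assms])
  also have "\<dots> = (\<Sum>r\<in>f ` A. of_int (\<Sum>s\<in>{s\<in>A. f s = r}. c s) * G r)"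
    by (rule sum.cong) (auto simp: of_int_sum sum_distrib_right)
  finally show ?thesis .
qed

lemma sum_of_int_product:
  fixes G :: "'r \<Rightarrow> 'a::comm_ring_1"
  assumes "\<And>r r'. r \<in> S \<Longrightarrow> r' \<in> S' \<Longrightarrow> G (f (r, r')) = G r * G r'"
  shows "(\<Sum>s\<in>S \<times> S'. of_int (c (fst s) * c' (snd s)) * G (f s)) =
         (\<Sum>r\<in>S. of_int (c r) * G r) * (\<Sum>r\<in>S'. of_int (c' r) * G r)"
  unfolding sum_product sum.cartesian_product
  by (rule sum.cong) (auto simp: assms mult_ac)

lemma sum_fiber_reindex:
  assumes "\<forall>r\<in>T. snd r = m"
  shows "(\<Sum>r\<in>T. g r) = (\<Sum>p\<in>fst ` T. g (p, m))"
proof -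
  have "inj_on fst T"
    using assms by (auto simp: inj_on_def prod_eq_iff)
  then have "(\<Sum>p\<in>fst ` T. g (p, m)) = (\<Sum>r\<in>T. g (fst r, m))"
    by (simp add: sum.reindex)
  also have "\<dots> = (\<Sum>r\<in>T. g r)"
    using assms by (intro sum.cong) (auto simp: prod_eq_iff)
  finally show ?thesis ..
qed

locale field_specialization =
  semifield_hom P P' h
  for P :: "('p, 'b) semifield_scheme" and P' :: "('q, 'c) semifield_scheme" and h +
  fixes n :: nat and \<iota> :: "'p \<Rightarrow> 'f::field" and x :: "nat \<Rightarrow> 'f"
    and \<iota>' :: "'q \<Rightarrow> 'g::field" and x' :: "nat \<Rightarrow> 'g"
  assumes embedding: "coeff_embedding P \<iota>"
    and embedding': "coeff_embedding P' \<iota>'"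
    and basis: "gen_trans_basis n (frac_group_ring A.car \<iota>) x"
begin

definition term_val :: "'p \<times> (nat \<Rightarrow> nat) \<Rightarrow> 'f" where
  "term_val r = \<iota> (fst r) * monomial_val n x (snd r)"

definition term_val' :: "'p \<times> (nat \<Rightarrow> nat) \<Rightarrow> 'g" where
  "term_val' r = \<iota>' (h (fst r)) * monomial_val n x' (snd r)"

text \<open>\<open>f'\<close> arises from \<open>f \<in> \<int>\<bbbP>[x]\<close> by applying \<open>h\<close> to the coefficients and substituting \<open>x'\<close>
  for \<open>x\<close>. Since \<open>x\<close> is algebraically independent over \<open>\<rat>\<bbbP>\<close> and \<open>\<int>\<bbbP>\<close> embeds into the ambient
  field, \<open>f\<close> determines \<open>f'\<close>.\<close>

definition spec_poly_pairs :: "('f \<times> 'g) set" where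
  "spec_poly_pairs =
     {((\<Sum>r\<in>S. of_int (c r) * term_val r), (\<Sum>r\<in>S. of_int (c r) * term_val' r)) | S c.
        finite S \<and> S \<subseteq> A.car \<times> monomials n}"

lemma iota_mult: "a \<in> A.car \<Longrightarrow> b \<in> A.car \<Longrightarrow> \<iota> (A.mul a b) = \<iota> a * \<iota> b"
  using embedding unfolding coeff_embedding_def by simp

lemma iota'_mult: "a \<in> B.car \<Longrightarrow> b \<in> B.car \<Longrightarrow> \<iota>' (B.mul a b) = \<iota>' a * \<iota>' b"
  using embedding' unfolding coeff_embedding_def by simp

lemma iota_one: "\<iota> A.one = 1" and iota'_one: "\<iota>' B.one = 1"
  using embedding embedding' unfolding coeff_embedding_def by simp_all

lemma term_val_mult:
  "a \<in> A.car \<Longrightarrow> b \<in> A.car \<Longrightarrow>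
   term_val (A.mul a b, \<lambda>i. m i + m' i) = term_val (a, m) * term_val (b, m')"
  by (auto simp: term_val_def iota_mult monomial_val_add)

lemma term_val'_mult:
  "a \<in> A.car \<Longrightarrow> b \<in> A.car \<Longrightarrow>
   term_val' (A.mul a b, \<lambda>i. m i + m' i) = term_val' (a, m) * term_val' (b, m')"
  by (auto simp: term_val'_def hom_mult hom_closed iota'_mult monomial_val_add)

lemma spec_poly_pairsI:
  "finite S \<Longrightarrow> S \<subseteq> A.car \<times> monomials n \<Longrightarrow>
   ((\<Sum>r\<in>S. of_int (c r) * term_val r), (\<Sum>r\<in>S. of_int (c r) * term_val' r)) \<in> spec_poly_pairs"
  unfolding spec_poly_pairs_def by blast

lemma spec_poly_pairs_reindex:
  assumes "finite S" and "f ` S \<subseteq> A.car \<times> monomials n"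
  shows "((\<Sum>s\<in>S. of_int (c s) * term_val (f s)), (\<Sum>s\<in>S. of_int (c s) * term_val' (f s)))
           \<in> spec_poly_pairs"
  unfolding sum_of_int_regroup[OF assms(1), of c term_val f] sum_of_int_regroup[OF assms(1), of c term_val' f]
  using assms by (intro spec_poly_pairsI) auto

lemma spec_poly_pairs_add:
  assumes "(u, u') \<in> spec_poly_pairs" and "(v, v') \<in> spec_poly_pairs"
  shows "(u + v, u' + v') \<in> spec_poly_pairs"
proof -
  obtain S c where S: "finite S" "S \<subseteq> A.car \<times> monomials n"
    and u: "u = (\<Sum>r\<in>S. of_int (c r) * term_val r)" "u' = (\<Sum>r\<in>S. of_int (c r) * term_val' r)"
    using assms(1) unfolding spec_poly_pairs_def by blast
  obtain T d where T: "finite T" "T \<subseteq> A.car \<times> monomials n"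
    and v: "v = (\<Sum>r\<in>T. of_int (d r) * term_val r)" "v' = (\<Sum>r\<in>T. of_int (d r) * term_val' r)"
    using assms(2) unfolding spec_poly_pairs_def by blast
  have "((\<Sum>s\<in>S <+> T. of_int (case_sum c d s) * term_val (case_sum id id s)),
         (\<Sum>s\<in>S <+> T. of_int (case_sum c d s) * term_val' (case_sum id id s))) \<in> spec_poly_pairs"
    using S T by (intro spec_poly_pairs_reindex) auto
  then show ?thesis
    using u v S(1) T(1) by (simp add: sum.Plus comp_def)
qed

lemma spec_poly_pairs_uminus:
  assumes "(u, u') \<in> spec_poly_pairs"
  shows "(- u, - u') \<in> spec_poly_pairs"
proof -
  obtain S c where S: "finite S" "S \<subseteq> A.car \<times> monomials n"
    and u: "u = (\<Sum>r\<in>S. of_int (c r) * term_val r)" "u' = (\<Sum>r\<in>S. of_int (c r) * term_val' r)"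
    using assms unfolding spec_poly_pairs_def by blast
  have "((\<Sum>r\<in>S. of_int (- c r) * term_val r), (\<Sum>r\<in>S. of_int (- c r) * term_val' r)) \<in> spec_poly_pairs"
    using S by (rule spec_poly_pairsI)
  then show ?thesis
    using u by (simp add: sum_negf)
qed

lemma spec_poly_pairs_diff:
  "(u, u') \<in> spec_poly_pairs \<Longrightarrow> (v, v') \<in> spec_poly_pairs \<Longrightarrow> (u - v, u' - v') \<in> spec_poly_pairs"
  using spec_poly_pairs_add[of u u' "- v" "- v'"] spec_poly_pairs_uminus[of v v'] by simp

lemma spec_poly_pairs_mult:
  assumes "(u, u') \<in> spec_poly_pairs" and "(v, v') \<in> spec_poly_pairs"
  shows "(u * v, u' * v') \<in> spec_poly_pairs"
proof -
  obtain S c where S: "finite S" "S \<subseteq> A.car \<times> monomials n"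
    and u: "u = (\<Sum>r\<in>S. of_int (c r) * term_val r)" "u' = (\<Sum>r\<in>S. of_int (c r) * term_val' r)"
    using assms(1) unfolding spec_poly_pairs_def by blast
  obtain T d where T: "finite T" "T \<subseteq> A.car \<times> monomials n"
    and v: "v = (\<Sum>r\<in>T. of_int (d r) * term_val r)" "v' = (\<Sum>r\<in>T. of_int (d r) * term_val' r)"
    using assms(2) unfolding spec_poly_pairs_def by blast
  define f where "f s = (A.mul (fst (fst s)) (fst (snd s)), \<lambda>i. snd (fst s) i + snd (snd s) i)"
    for s :: "('p \<times> (nat \<Rightarrow> nat)) \<times> ('p \<times> (nat \<Rightarrow> nat))"
  have "f ` (S \<times> T) \<subseteq> A.car \<times> monomials n"
    using S(2) T(2) by (fastforce simp: f_def monomials_def)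
  then have "((\<Sum>s\<in>S \<times> T. of_int (c (fst s) * d (snd s)) * term_val (f s)),
              (\<Sum>s\<in>S \<times> T. of_int (c (fst s) * d (snd s)) * term_val' (f s))) \<in> spec_poly_pairs"
    using S T by (intro spec_poly_pairs_reindex) auto
  moreover have "(\<Sum>s\<in>S \<times> T. of_int (c (fst s) * d (snd s)) * term_val (f s)) = u * v"
    unfolding u v using S(2) T(2) by (intro sum_of_int_product) (fastforce simp: f_def term_val_mult)
  moreover have "(\<Sum>s\<in>S \<times> T. of_int (c (fst s) * d (snd s)) * term_val' (f s)) = u' * v'"
    unfolding u v using S(2) T(2) by (intro sum_of_int_product) (fastforce simp: f_def term_val'_mult)
  ultimately show ?thesis
    by simp
qed

lemma spec_poly_pairs_const:
  assumes "p \<in> A.car"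
  shows "(\<iota> p, \<iota>' (h p)) \<in> spec_poly_pairs"
proof -
  have "((\<Sum>r\<in>{(p, \<lambda>_. 0)}. of_int 1 * term_val r), (\<Sum>r\<in>{(p, \<lambda>_. 0)}. of_int 1 * term_val' r))
          \<in> spec_poly_pairs"
    using assms by (intro spec_poly_pairsI) (auto simp: monomials_def)
  then show ?thesis
    by (simp add: term_val_def term_val'_def monomial_val_def)
qed

lemma spec_poly_pairs_var:
  assumes "i < n"
  shows "(x i, x' i) \<in> spec_poly_pairs"
proof -
  have "((\<Sum>r\<in>{(A.one, \<lambda>j. if j = i then 1 else 0)}. of_int 1 * term_val r),
         (\<Sum>r\<in>{(A.one, \<lambda>j. if j = i then 1 else 0)}. of_int 1 * term_val' r)) \<in> spec_poly_pairs"
    using assms by (intro spec_poly_pairsI) (auto simp: monomials_def)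
  then show ?thesis
    using assms
    by (simp add: term_val_def term_val'_def monomial_val_def prod_power_indicator hom_one iota_one iota'_one)
qed

definition grouped_coeff ::
    "('p \<times> (nat \<Rightarrow> nat)) set \<Rightarrow> ('p \<times> (nat \<Rightarrow> nat) \<Rightarrow> int) \<Rightarrow> (nat \<Rightarrow> nat) \<Rightarrow> 'f" where
  "grouped_coeff S c m = (\<Sum>p\<in>fst ` {r \<in> S. snd r = m}. of_int (c (p, m)) * \<iota> p)"

lemma grouped_coeff_fiber: "grouped_coeff S c m = (\<Sum>r\<in>{r \<in> S. snd r = m}. of_int (c r) * \<iota> (fst r))"
  using sum_fiber_reindex[of "{r \<in> S. snd r = m}" m "\<lambda>r. of_int (c r) * \<iota> (fst r)"]
  by (simp add: grouped_coeff_def)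

lemma grouped_coeff_in_frac_group_ring:
  assumes "finite S" and "S \<subseteq> A.car \<times> monomials n"
  shows "grouped_coeff S c m \<in> frac_group_ring A.car \<iota>"
proof -
  have "grouped_coeff S c m \<in> group_ring_image A.car \<iota>"
    unfolding grouped_coeff_def group_ring_image_def
    by (intro CollectI exI[of _ "fst ` {r \<in> S. snd r = m}"] exI[of _ "\<lambda>p. c (p, m)"]) (use assms in auto)
  then show ?thesis
    using A.group_ring_image_subset_frac_group_ring[OF embedding] by blast
qed

lemma grouped_coeff_support: "{m. grouped_coeff S c m \<noteq> 0} \<subseteq> snd ` S"
proof
  fix m assume m: "m \<in> {m. grouped_coeff S c m \<noteq> 0}"
  show "m \<in> snd ` S"
  proof (rule ccontr)
    assume "m \<notin> snd ` S"
    then have "{r \<in> S. snd r = m} = {}"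
      by (auto intro: rev_image_eqI)
    then have "grouped_coeff S c m = 0"
      by (simp only: grouped_coeff_def image_empty sum.empty)
    then show False
      using m by simp
  qed
qed

lemma fin_poly_grouped_coeff:
  assumes "finite S" and "S \<subseteq> A.car \<times> monomials n"
  shows "fin_poly n (grouped_coeff S c)"
proof -
  have "snd ` S \<subseteq> monomials n"
    using assms(2) by auto
  moreover have "finite {m. grouped_coeff S c m \<noteq> 0}"
    using grouped_coeff_support by (rule finite_subset) (simp add: assms(1))
  ultimately show ?thesis
    using grouped_coeff_support unfolding fin_poly_def by blast
qed

lemma term_sum_eq_poly_eval:
  assumes "finite S"
  shows "(\<Sum>r\<in>S. of_int (c r) * term_val r) = poly_eval n (grouped_coeff S c) x"
proof -
  have "poly_eval n (grouped_coeff S c) x = (\<Sum>m\<in>snd ` S. grouped_coeff S c m * monomial_val n x m)"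
    unfolding poly_eval_def monomial_val_def[symmetric]
    by (rule sum.mono_neutral_left) (use assms grouped_coeff_support in auto)
  also have "\<dots> = (\<Sum>m\<in>snd ` S. \<Sum>r\<in>{r \<in> S. snd r = m}. of_int (c r) * term_val r)"
    unfolding grouped_coeff_fiber sum_distrib_right
    by (intro sum.cong refl) (auto simp: term_val_def mult_ac)
  also have "\<dots> = (\<Sum>r\<in>S. of_int (c r) * term_val r)"
    by (simp add: sum.image_gen[OF assms, symmetric])
  finally show ?thesis ..
qed

lemma term_sum_eq_zero_imp_coeff_zero:
  assumes S: "finite S" "S \<subseteq> A.car \<times> monomials n"
    and zero: "(\<Sum>r\<in>S. of_int (c r) * term_val r) = 0"
    and "r \<in> S"
  shows "c r = 0"
proof -
  define T where "T = fst ` {r' \<in> S. snd r' = snd r}"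
  have independent: "\<forall>d. fin_poly n d \<longrightarrow> (\<forall>m. d m \<in> frac_group_ring A.car \<iota>) \<longrightarrow>
      poly_eval n d x = 0 \<longrightarrow> (\<forall>m. d m = 0)"
    using basis unfolding gen_trans_basis_def by (rule conjunct1)
  have injective: "\<forall>T d. finite T \<longrightarrow> T \<subseteq> A.car \<longrightarrow>
      (\<Sum>s\<in>T. of_int (d s) * \<iota> s) = 0 \<longrightarrow> (\<forall>s\<in>T. d s = (0::int))"
    using embedding unfolding coeff_embedding_def by (elim conjE)
  have "grouped_coeff S c (snd r) = 0"
    using independent[rule_format, OF fin_poly_grouped_coeff[OF S] grouped_coeff_in_frac_group_ring[OF S]
        zero[unfolded term_sum_eq_poly_eval[OF S(1)]]] .
  then have "(\<Sum>p\<in>T. of_int (c (p, snd r)) * \<iota> p) = 0"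
    by (simp add: grouped_coeff_def T_def)
  moreover have "finite T" "T \<subseteq> A.car" "fst r \<in> T"
    using S \<open>r \<in> S\<close> by (auto simp: T_def)
  ultimately show "c r = 0"
    using injective[rule_format, of T "\<lambda>p. c (p, snd r)" "fst r"] by simp
qed

lemma spec_poly_pairs_zero:
  assumes "(0, v) \<in> spec_poly_pairs"
  shows "v = 0"
proof -
  obtain S c where S: "finite S" "S \<subseteq> A.car \<times> monomials n"
    and zero: "0 = (\<Sum>r\<in>S. of_int (c r) * term_val r)"
    and v: "v = (\<Sum>r\<in>S. of_int (c r) * term_val' r)"
    using assms unfolding spec_poly_pairs_def by blast
  have "c r = 0" if "r \<in> S" for r
    using term_sum_eq_zero_imp_coeff_zero[OF S zero[symmetric] that] .
  then show ?thesis
    using v by simp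
qed

definition spec_pairs :: "('f \<times> 'g) set" where
  "spec_pairs = {(u / v, u' / v') | u u' v v'.
     (u, u') \<in> spec_poly_pairs \<and> (v, v') \<in> spec_poly_pairs \<and> v' \<noteq> 0}"

lemma spec_pairsI:
  "(u, u') \<in> spec_poly_pairs \<Longrightarrow> (v, v') \<in> spec_poly_pairs \<Longrightarrow> v' \<noteq> 0 \<Longrightarrow>
   (u / v, u' / v') \<in> spec_pairs"
  unfolding spec_pairs_def by blast

lemma spec_pairsE:
  assumes "(a, a') \<in> spec_pairs"
  obtains u u' v v' where "(u, u') \<in> spec_poly_pairs" "(v, v') \<in> spec_poly_pairs"
    "v \<noteq> 0" "v' \<noteq> 0" "a = u / v" "a' = u' / v'"
  using assms spec_poly_pairs_zero unfolding spec_pairs_def by blast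

lemma spec_pairs_functional:
  assumes "(a, a') \<in> spec_pairs" and "(a, a'') \<in> spec_pairs"
  shows "a' = a''"
proof -
  obtain u u' v v' where 1: "(u, u') \<in> spec_poly_pairs" "(v, v') \<in> spec_poly_pairs"
    "v \<noteq> 0" "v' \<noteq> 0" "a = u / v" "a' = u' / v'"
    using assms(1) by (rule spec_pairsE)
  obtain w w' z z' where 2: "(w, w') \<in> spec_poly_pairs" "(z, z') \<in> spec_poly_pairs"
    "z \<noteq> 0" "z' \<noteq> 0" "a = w / z" "a'' = w' / z'"
    using assms(2) by (rule spec_pairsE)
  have "(u * z - w * v, u' * z' - w' * v') \<in> spec_poly_pairs"
    using 1 2 by (intro spec_poly_pairs_diff spec_poly_pairs_mult)
  moreover have "u * z - w * v = 0"
    using 1 2 by (simp add: field_simps)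
  ultimately have "u' * z' = w' * v'"
    using spec_poly_pairs_zero by fastforce
  then show ?thesis
    using 1 2 by (simp add: frac_eq_eq)
qed

lemma spec_pairs_of_poly: "(u, u') \<in> spec_poly_pairs \<Longrightarrow> (u, u') \<in> spec_pairs"
  using spec_pairsI[of u u' 1 1] spec_poly_pairs_const[OF A.one_closed]
  by (simp add: hom_one iota_one iota'_one)

lemma spec_pairs_one: "(1, 1) \<in> spec_pairs"
  using spec_pairs_of_poly spec_poly_pairs_const[OF A.one_closed] by (simp add: hom_one iota_one iota'_one)

lemma spec_pairs_const: "p \<in> A.car \<Longrightarrow> (\<iota> p, \<iota>' (h p)) \<in> spec_pairs"
  by (rule spec_pairs_of_poly[OF spec_poly_pairs_const])

lemma spec_pairs_var: "i < n \<Longrightarrow> (x i, x' i) \<in> spec_pairs"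
  by (rule spec_pairs_of_poly[OF spec_poly_pairs_var])

lemma spec_pairs_add:
  assumes "(a, a') \<in> spec_pairs" and "(b, b') \<in> spec_pairs"
  shows "(a + b, a' + b') \<in> spec_pairs"
proof -
  obtain u u' v v' where 1: "(u, u') \<in> spec_poly_pairs" "(v, v') \<in> spec_poly_pairs"
    "v \<noteq> 0" "v' \<noteq> 0" "a = u / v" "a' = u' / v'"
    using assms(1) by (rule spec_pairsE)
  obtain w w' z z' where 2: "(w, w') \<in> spec_poly_pairs" "(z, z') \<in> spec_poly_pairs"
    "z \<noteq> 0" "z' \<noteq> 0" "b = w / z" "b' = w' / z'"
    using assms(2) by (rule spec_pairsE)
  have "((u * z + w * v) / (v * z), (u' * z' + w' * v') / (v' * z')) \<in> spec_pairs"
    using 1 2 by (intro spec_pairsI spec_poly_pairs_add spec_poly_pairs_mult) auto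
  then show ?thesis
    using 1 2 by (simp add: add_frac_eq)
qed

lemma spec_pairs_mult:
  assumes "(a, a') \<in> spec_pairs" and "(b, b') \<in> spec_pairs"
  shows "(a * b, a' * b') \<in> spec_pairs"
proof -
  obtain u u' v v' where 1: "(u, u') \<in> spec_poly_pairs" "(v, v') \<in> spec_poly_pairs"
    "v \<noteq> 0" "v' \<noteq> 0" "a = u / v" "a' = u' / v'"
    using assms(1) by (rule spec_pairsE)
  obtain w w' z z' where 2: "(w, w') \<in> spec_poly_pairs" "(z, z') \<in> spec_poly_pairs"
    "z \<noteq> 0" "z' \<noteq> 0" "b = w / z" "b' = w' / z'"
    using assms(2) by (rule spec_pairsE)
  have "((u * w) / (v * z), (u' * w') / (v' * z')) \<in> spec_pairs"
    using 1 2 by (intro spec_pairsI spec_poly_pairs_mult) auto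
  then show ?thesis
    using 1 2 by simp
qed

lemma spec_pairs_inverse:
  assumes "(a, a') \<in> spec_pairs" and "a' \<noteq> 0"
  shows "(inverse a, inverse a') \<in> spec_pairs"
proof -
  obtain u u' v v' where 1: "(u, u') \<in> spec_poly_pairs" "(v, v') \<in> spec_poly_pairs"
    "v \<noteq> 0" "v' \<noteq> 0" "a = u / v" "a' = u' / v'"
    using assms(1) by (rule spec_pairsE)
  then have "(v / u, v' / u') \<in> spec_pairs"
    using assms(2) by (intro spec_pairsI) auto
  then show ?thesis
    using 1 by simp
qed

lemma spec_pairs_divide:
  "(a, a') \<in> spec_pairs \<Longrightarrow> (b, b') \<in> spec_pairs \<Longrightarrow> b' \<noteq> 0 \<Longrightarrow> (a / b, a' / b') \<in> spec_pairs"
  using spec_pairs_mult[of a a' "inverse b" "inverse b'"] spec_pairs_inverse[of b b']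
  by (simp add: divide_inverse)

lemma spec_pairs_power: "(a, a') \<in> spec_pairs \<Longrightarrow> (a ^ k, a' ^ k) \<in> spec_pairs"
  by (induction k) (simp_all add: spec_pairs_one spec_pairs_mult)

lemma spec_pairs_power_int:
  "(a, a') \<in> spec_pairs \<Longrightarrow> a' \<noteq> 0 \<Longrightarrow> (a powi k, a' powi k) \<in> spec_pairs"
  by (simp add: power_int_def spec_pairs_power spec_pairs_inverse)

lemma spec_pairs_prod:
  "finite J \<Longrightarrow> (\<And>j. j \<in> J \<Longrightarrow> (f j, f' j) \<in> spec_pairs) \<Longrightarrow>
   ((\<Prod>j\<in>J. f j), (\<Prod>j\<in>J. f' j)) \<in> spec_pairs"
  by (induction J rule: finite_induct) (simp_all add: spec_pairs_one spec_pairs_mult)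
lemma spec_pairs_mut_x:
  assumes "k < n" and "i < n"
    and cluster: "\<And>j. j < n \<Longrightarrow> (xt j, xt' j) \<in> spec_pairs" "\<And>j. j < n \<Longrightarrow> xt' j \<noteq> 0"
    and coeff: "yt k \<in> A.car" "yt' k = h (yt k)"
  shows "(mut_x P \<iota> n k xt yt M i, mut_x P' \<iota>' n k xt' yt' M i) \<in> spec_pairs"
proof (cases "i = k")
  case True
  have monomial: "((\<Prod>j<n. xt j powi e j), (\<Prod>j<n. xt' j powi e j)) \<in> spec_pairs" for e
    using cluster by (intro spec_pairs_prod spec_pairs_power_int) simp_all
  have "(1 + \<iota> (yt k) * (\<Prod>j<n. xt j powi M j k), 1 + \<iota>' (yt' k) * (\<Prod>j<n. xt' j powi M j k))
          \<in> spec_pairs"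
    using coeff by (intro spec_pairs_add spec_pairs_one spec_pairs_mult monomial) (simp_all add: spec_pairs_const)
  moreover have "B.add B.one (yt' k) = h (A.add A.one (yt k))"
    using coeff by (simp add: hom_add hom_one)
  then have "(\<iota> (A.add A.one (yt k)), \<iota>' (B.add B.one (yt' k))) \<in> spec_pairs"
    and "\<iota>' (B.add B.one (yt' k)) \<noteq> 0"
    using coeff B.embedding_nonzero[OF embedding'] by (simp_all add: spec_pairs_const hom_closed)
  ultimately show ?thesis
    using True \<open>k < n\<close> cluster
    by (simp add: mut_x_def spec_pairs_divide spec_pairs_mult spec_pairs_inverse monomial)
next
  case False
  then show ?thesis
    using cluster \<open>i < n\<close> by (simp add: mut_x_def)
qed

end

section \<open>Propagation along the exchange tree\<close>

lemma tree_vertex_snoc: "tree_vertex n (w @ [k]) \<Longrightarrow> tree_vertex n w \<and> k < n"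
  unfolding tree_vertex_def
proof (intro conjI allI impI)
  assume w: "set (w @ [k]) \<subseteq> {..<n} \<and>
    (\<forall>i. Suc i < length (w @ [k]) \<longrightarrow> (w @ [k]) ! i \<noteq> (w @ [k]) ! Suc i)"
  then show "set w \<subseteq> {..<n}" and "k < n"
    by auto
  fix i assume "Suc i < length w"
  then show "w ! i \<noteq> w ! Suc i"
    using w[THEN conjunct2, rule_format, of i] by (simp add: nth_append)
qed

lemma tree_vertex_propagate:
  assumes root: "tree_vertex n t0" "Q t0"
    and edge: "\<And>s s' k. tree_edge n s s' k \<Longrightarrow> Q s \<Longrightarrow> Q s'"
    and "tree_vertex n t"
  shows "Q t"
proof -
  have up: "tree_vertex n s \<Longrightarrow> Q s \<Longrightarrow> Q []" for s
  proof (induction s rule: rev_induct)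
    case (snoc k w)
    then have "tree_vertex n w" and "tree_edge n (w @ [k]) w k"
      using tree_vertex_snoc by (simp_all add: tree_edge_def)
    then show ?case
      using snoc.IH edge snoc.prems(2) by blast
  qed
  have down: "tree_vertex n s \<Longrightarrow> Q [] \<Longrightarrow> Q s" for s
  proof (induction s rule: rev_induct)
    case (snoc k w)
    then have "tree_vertex n w" and "tree_edge n w (w @ [k]) k"
      using tree_vertex_snoc by (simp_all add: tree_edge_def)
    then show ?case
      using snoc.IH edge snoc.prems(2) by blast
  qed
  show ?thesis
    using up[OF root] down assms(4) by blast
qed

lemma gen_trans_basis_nonzero:
  fixes x :: "nat \<Rightarrow> 'f::field"
  assumes "gen_trans_basis n K x" and "0 \<in> K" "1 \<in> K" and "i < n"
  shows "x i \<noteq> 0"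
proof
  assume "x i = 0"
  define e where "e = (\<lambda>j. if j = i then 1 else (0::nat))"
  define c :: "(nat \<Rightarrow> nat) \<Rightarrow> 'f" where "c m = (if m = e then 1 else 0)" for m
  have supp: "{m. c m \<noteq> 0} = {e}"
    by (auto simp: c_def)
  have "fin_poly n c"
    unfolding fin_poly_def supp using \<open>i < n\<close> by (auto simp: e_def monomials_def)
  moreover have "poly_eval n c x = 0"
    unfolding poly_eval_def supp using \<open>x i = 0\<close> \<open>i < n\<close> by (simp add: c_def e_def prod_power_indicator)
  moreover have "\<forall>m. c m \<in> K"
    using assms(2,3) by (simp add: c_def)
  ultimately have "c e = 0"
    using assms(1) unfolding gen_trans_basis_def by blast
  then show False
    by (simp add: c_def)
qed

lemma mut_x_cong:
  "(\<And>j. j < n \<Longrightarrow> M' j k = M j k) \<Longrightarrow> mut_x P \<iota> n k x y M' i = mut_x P \<iota> n k x y M i"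
  by (simp add: mut_x_def)

locale pattern_specialization =
  semifield_hom P P' h
  for P :: "('p, 'b) semifield_scheme" and P' :: "('q, 'c) semifield_scheme" and h +
  fixes n :: nat
    and \<iota> :: "'p \<Rightarrow> 'f::field" and X :: "nat list \<Rightarrow> nat \<Rightarrow> 'f"
    and Y :: "nat list \<Rightarrow> nat \<Rightarrow> 'p" and B :: "nat list \<Rightarrow> nat \<Rightarrow> nat \<Rightarrow> int"
    and \<iota>' :: "'q \<Rightarrow> 'g::field" and X' :: "nat list \<Rightarrow> nat \<Rightarrow> 'g"
    and Y' :: "nat list \<Rightarrow> nat \<Rightarrow> 'q" and B' :: "nat list \<Rightarrow> nat \<Rightarrow> nat \<Rightarrow> int"
    and t0 :: "nat list"
  assumes pattern: "cluster_pattern P \<iota> n X Y B"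
    and pattern': "cluster_pattern P' \<iota>' n X' Y' B'"
    and same_B: "\<And>s i j. tree_vertex n s \<Longrightarrow> i < n \<Longrightarrow> j < n \<Longrightarrow> B' s i j = B s i j"
    and root: "tree_vertex n t0"
    and hom_Y_root: "\<And>i. i < n \<Longrightarrow> h (Y t0 i) = Y' t0 i"
begin

sublocale field_specialization P P' h n \<iota> "X t0" \<iota>' "X' t0"
  using pattern pattern' root by unfold_locales (simp_all add: cluster_pattern_def is_seed_def)

lemma Y_closed: "tree_vertex n s \<Longrightarrow> i < n \<Longrightarrow> Y s i \<in> A.car"
  using pattern by (simp add: cluster_pattern_def is_seed_def)

lemma X'_nonzero:
  assumes "tree_vertex n s" and "i < n"
  shows "X' s i \<noteq> 0"
proof -
  have "gen_trans_basis n (frac_group_ring B.car \<iota>') (X' s)"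
    using pattern' assms(1) by (simp add: cluster_pattern_def is_seed_def)
  then show ?thesis
    using gen_trans_basis_nonzero B.zero_one_in_frac_group_ring[OF embedding'] assms(2) by blast
qed

definition specializes :: "nat list \<Rightarrow> bool" where
  "specializes s \<longleftrightarrow> (\<forall>i<n. (X s i, X' s i) \<in> spec_pairs \<and> h (Y s i) = Y' s i)"

lemma specializes_mutation:
  assumes edge: "tree_edge n s s' k" and "specializes s"
  shows "specializes s'"
  unfolding specializes_def
proof (intro allI impI conjI)
  fix i assume "i < n"
  have s: "tree_vertex n s" and "k < n"
    using edge by (auto simp: tree_edge_def)
  have "\<forall>i<n. X s' i = mut_x P \<iota> n k (X s) (Y s) (B s) i \<and> Y s' i = mut_y P k (Y s) (B s) i"
    using pattern edge unfolding cluster_pattern_def by blast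
  then have X: "X s' i = mut_x P \<iota> n k (X s) (Y s) (B s) i" and Y: "Y s' i = mut_y P k (Y s) (B s) i"
    using \<open>i < n\<close> by simp_all
  have "\<forall>i<n. X' s' i = mut_x P' \<iota>' n k (X' s) (Y' s) (B' s) i \<and> Y' s' i = mut_y P' k (Y' s) (B' s) i"
    using pattern' edge unfolding cluster_pattern_def by blast
  then have X': "X' s' i = mut_x P' \<iota>' n k (X' s) (Y' s) (B' s) i"
    and Y': "Y' s' i = mut_y P' k (Y' s) (B' s) i"
    using \<open>i < n\<close> by simp_all
  have spec_X: "\<And>j. j < n \<Longrightarrow> (X s j, X' s j) \<in> spec_pairs"
    and hom_Y: "\<And>j. j < n \<Longrightarrow> h (Y s j) = Y' s j"
    using \<open>specializes s\<close> by (simp_all add: specializes_def)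
  have "(mut_x P \<iota> n k (X s) (Y s) (B s) i, mut_x P' \<iota>' n k (X' s) (Y' s) (B s) i) \<in> spec_pairs"
    using \<open>k < n\<close> \<open>i < n\<close> spec_X X'_nonzero[OF s] Y_closed[OF s \<open>k < n\<close>]
      hom_Y[OF \<open>k < n\<close>, symmetric]
    by (rule spec_pairs_mut_x)
  moreover have "mut_x P' \<iota>' n k (X' s) (Y' s) (B' s) i = mut_x P' \<iota>' n k (X' s) (Y' s) (B s) i"
    using same_B[OF s _ \<open>k < n\<close>] by (rule mut_x_cong)
  ultimately show "(X s' i, X' s' i) \<in> spec_pairs"
    using X X' by simp
  have "h (Y s' i) = mut_y P' k (\<lambda>j. h (Y s j)) (B s) i"
    unfolding Y by (rule hom_mut_y) (simp_all add: Y_closed[OF s] \<open>k < n\<close> \<open>i < n\<close>)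
  also have "\<dots> = Y' s' i"
    using Y' hom_Y same_B[OF s] \<open>k < n\<close> \<open>i < n\<close> by (simp add: mut_y_def)
  finally show "h (Y s' i) = Y' s' i" .
qed

lemma specializes_root: "specializes t0"
  using spec_pairs_var hom_Y_root by (simp add: specializes_def)

lemma specializes_vertex: "tree_vertex n s \<Longrightarrow> specializes s"
  using root specializes_root specializes_mutation by (rule tree_vertex_propagate)

lemma seed_eq_perm_transfer:
  assumes t: "tree_vertex n t" and t': "tree_vertex n t'" and \<sigma>: "\<sigma> permutes {..<n}"
    and eq: "seed_eq_perm n \<sigma> (X t) (Y t) (B t) (X t') (Y t') (B t')"
  shows "seed_eq_perm n \<sigma> (X' t) (Y' t) (B' t) (X' t') (Y' t') (B' t')"
  unfolding seed_eq_perm_def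
proof (intro allI impI conjI)
  have inv_\<sigma>: "j < n \<Longrightarrow> inv \<sigma> j < n" for j
    using permutes_in_image[OF permutes_inv[OF \<sigma>]] by simp
  have spec: "specializes t" "specializes t'"
    using specializes_vertex t t' by blast+
  fix i assume "i < n"
  then have "X t i = X t' (inv \<sigma> i)" and "Y t i = Y t' (inv \<sigma> i)"
    using eq by (simp_all add: seed_eq_perm_def)
  moreover have "(X t i, X' t i) \<in> spec_pairs" and "h (Y t i) = Y' t i"
    and "(X t' (inv \<sigma> i), X' t' (inv \<sigma> i)) \<in> spec_pairs" and "h (Y t' (inv \<sigma> i)) = Y' t' (inv \<sigma> i)"
    using spec \<open>i < n\<close> inv_\<sigma> by (simp_all add: specializes_def)
  ultimately show "X' t i = X' t' (inv \<sigma> i)" and "Y' t i = Y' t' (inv \<sigma> i)"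
    by (simp_all add: spec_pairs_functional)
  fix j assume "j < n"
  then show "B' t i j = B' t' (inv \<sigma> i) (inv \<sigma> j)"
    using eq same_B t t' \<open>i < n\<close> inv_\<sigma> by (simp add: seed_eq_perm_def)
qed

end

theorem proposition2p26:
  fixes n :: nat
    and y :: "nat \<Rightarrow> 'k::field_char_0"
    and \<iota> :: "'k \<Rightarrow> 'f::field"
    and X :: "nat list \<Rightarrow> nat \<Rightarrow> 'f"
    and Y :: "nat list \<Rightarrow> nat \<Rightarrow> 'k"
    and B :: "nat list \<Rightarrow> nat \<Rightarrow> nat \<Rightarrow> int"
    and P' :: "'q semifield"
    and \<iota>' :: "'q \<Rightarrow> 'g::field"
    and X' :: "nat list \<Rightarrow> nat \<Rightarrow> 'g"
    and Y' :: "nat list \<Rightarrow> nat \<Rightarrow> 'q"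
    and B' :: "nat list \<Rightarrow> nat \<Rightarrow> nat \<Rightarrow> int"
    and t0 t t' :: "nat list"
    and \<sigma> :: "nat \<Rightarrow> nat"
  assumes "rational_function_field n y"
    and "tree_vertex n t0"
    and "cluster_pattern (univ_semifield n y) \<iota> n X Y B"
    and "\<forall>i<n. Y t0 i = y i"
    and "cluster_pattern P' \<iota>' n X' Y' B'"
    and "\<forall>s. tree_vertex n s \<longrightarrow> (\<forall>i<n. \<forall>j<n. B' s i j = B s i j)"
    and "tree_vertex n t" and "tree_vertex n t'"
    and "\<sigma> permutes {..<n}"
    and "seed_eq_perm n \<sigma> (X t) (Y t) (B t) (X t') (Y t') (B t')"
  shows "seed_eq_perm n \<sigma> (X' t) (Y' t) (B' t) (X' t') (Y' t') (B' t')"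
proof -
  have "is_semifield (univ_semifield n y)" and "is_semifield P'"
    and "\<forall>i<n. Y' t0 i \<in> sf_carrier P'"
    using assms(2,3,5) by (simp_all add: cluster_pattern_def is_seed_def)
  then interpret S: sf_specialization P' n "Y' t0" y
    using assms(1) by unfold_locales simp_all
  interpret pattern_specialization "univ_semifield n y" P' S.spec n \<iota> X Y B \<iota>' X' Y' B' t0
    using S.semifield_hom_sf_specialize \<open>is_semifield (univ_semifield n y)\<close> assms(2-6)
    by (simp add: pattern_specialization_def pattern_specialization_axioms_def S.sf_specialize_var)
  show ?thesis
    using seed_eq_perm_transfer assms(7-10) .
qed

end
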